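(* Let $n\in\mathbb{N}$ and let $\Delta:M_n\to M_n$ be a (not necessarily linear) weak-2-local derivation on $M_n=M_n(\mathbb{C})$ which is symmetric, i.e. $\Delta(a^* )^*=\Delta(a)$ for all $a\in M_n$. Then $\Delta$ is linear and a derivation.
   Context: A derivation on a C$^*$-algebra $A$ is a linear map $D:A\to A$ with $D(ab)=D(a)b+aD(b)$. A (not necessarily linear) map $\Delta:A\to A$ is a weak-2-local derivation if for every $a,b\in A$ and every $\phi\in A^*$ there exists a derivation $D_{a,b,\phi}:A\to A$ such that $\phi\Delta(a)=\phi D_{a,b,\phi}(a)$ and $\phi\Delta(b)=\phi D_{a,b,\phi}(b)$. *)

theory Defs
  imports "HOL-Analysis.Analysis"
begin

text \<open>M_n(C) is modelled as complex^'n^'n with 'n a finite index type (n = CARD('n)).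
  Product is matrix multiplication (**), the involution is the conjugate transpose.\<close>

definition cmat_adj :: "complex^'n^'n \<Rightarrow> complex^'n^'n" where
  "cmat_adj A = (\<chi> i j. cnj (A $ j $ i))"

definition cmat_scale :: "complex \<Rightarrow> complex^'n^'n \<Rightarrow> complex^'n^'n" where
  "cmat_scale c A = (\<chi> i j. c * A $ i $ j)"

definition clinear_op :: "(complex^'n^'n \<Rightarrow> complex^'n^'n) \<Rightarrow> bool" where
  "clinear_op T \<longleftrightarrow> (\<forall>a b. T (a + b) = T a + T b) \<and> (\<forall>c a. T (cmat_scale c a) = cmat_scale c (T a))"

text \<open>Complex-linear functionals on M_n (the dual space; all are bounded in finite dimension).\<close>
definition clinear_functional :: "(complex^'n^'n \<Rightarrow> complex) \<Rightarrow> bool" where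
  "clinear_functional \<phi> \<longleftrightarrow> (\<forall>a b. \<phi> (a + b) = \<phi> a + \<phi> b) \<and> (\<forall>c a. \<phi> (cmat_scale c a) = c * \<phi> a)"

definition is_derivation :: "(complex^'n^'n \<Rightarrow> complex^'n^'n) \<Rightarrow> bool" where
  "is_derivation D \<longleftrightarrow> clinear_op D \<and> (\<forall>a b. D (a ** b) = D a ** b + a ** D b)"

definition weak_2_local_derivation :: "(complex^'n^'n \<Rightarrow> complex^'n^'n) \<Rightarrow> bool" where
  "weak_2_local_derivation \<Delta> \<longleftrightarrow>
     (\<forall>a b \<phi>. clinear_functional \<phi> \<longrightarrow>
        (\<exists>D. is_derivation D \<and> \<phi> (\<Delta> a) = \<phi> (D a) \<and> \<phi> (\<Delta> b) = \<phi> (D b)))"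

end

theory Submission
  imports Defs
begin

text \<open>Every derivation of \<open>M\<^sub>n\<close> is inner, \<open>D z = a z - z a\<close>, so \<open>tr (w D z) = 0\<close> whenever
  \<open>z w = w z\<close>. Testing a weak-2-local derivation \<open>\<Delta>\<close> against the functionals \<open>tr (w \<cdot>)\<close>
  therefore gives \<open>tr (w \<Delta> x) = tr (w \<Delta> x')\<close> whenever \<open>x - x'\<close> commutes with \<open>w\<close>, and testing
  against the matrix entries shows that \<open>\<Delta>\<close> is homogeneous. Three suitable commuting pairs make
  \<open>f t = tr (w \<Delta> (x + t y))\<close> affine in \<open>t\<close>, while homogeneity applied to
  \<open>x + t y = t (y + t\<^sup>-\<^sup>1 x)\<close> makes it of the form \<open>t tr (w \<Delta> y) + c\<close>; comparing the two forms gives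
  additivity. Finally a linear map with \<open>tr (w \<Delta> z) = 0\<close> for all commuting \<open>z, w\<close> is inner:
  testing this condition on sums of matrix units determines every entry of every \<open>\<Delta> (e\<^sub>i\<^sub>j)\<close>
  through a single matrix.\<close>

lemma matrix_add_rdistrib: "(B + C) ** (A::'a::semiring_1^'n^'n) = B ** A + C ** A"
  by (simp add: vec_eq_iff matrix_matrix_mult_def sum.distrib distrib_right)

lemma matrix_diff_rdistrib: "(B - C) ** (A::'a::ring_1^'n^'n) = B ** A - C ** A"
  by (simp add: vec_eq_iff matrix_matrix_mult_def sum_subtractf left_diff_distrib)

lemma matrix_diff_ldistrib: "(A::'a::ring_1^'n^'n) ** (B - C) = A ** B - A ** C"
  by (simp add: vec_eq_iff matrix_matrix_mult_def sum_subtractf right_diff_distrib)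

lemma matrix_minus_left: "(- B) ** (A::'a::ring_1^'n^'n) = - (B ** A)"
  by (simp add: vec_eq_iff matrix_matrix_mult_def sum_negf)

lemma matrix_minus_right: "(A::'a::ring_1^'n^'n) ** (- B) = - (A ** B)"
  by (simp add: vec_eq_iff matrix_matrix_mult_def sum_negf)

lemma matrix_sum_left: "sum f S ** (A::'a::semiring_1^'n^'n) = (\<Sum>x\<in>S. f x ** A)"
  by (induction S rule: infinite_finite_induct) (auto simp: matrix_add_rdistrib)

lemma matrix_sum_right: "(A::'a::semiring_1^'n^'n) ** sum f S = (\<Sum>x\<in>S. A ** f x)"
  by (induction S rule: infinite_finite_induct) (auto simp: matrix_add_ldistrib)

definition mat_unit :: "'n \<Rightarrow> 'n \<Rightarrow> 'a::zero_neq_one^'n^'n" where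
  "mat_unit i j = (\<chi> p q. if p = i \<and> q = j then 1 else 0)"

lemma mat_unit_nth [simp]: "mat_unit i j $ p $ q = (if p = i then if q = j then 1 else 0 else 0)"
  by (simp add: mat_unit_def)

lemma mat_unit_mult_left_nth:
  "(mat_unit i j ** (M::'a::semiring_1^'n^'n)) $ p $ q = (if p = i then M $ j $ q else 0)"
  by (simp add: matrix_matrix_mult_def if_distrib[of "\<lambda>x. x * _"] sum.If_cases cong: if_cong)

lemma mat_unit_mult_right_nth:
  "((M::'a::semiring_1^'n^'n) ** mat_unit i j) $ p $ q = (if q = j then M $ p $ i else 0)"
  by (simp add: matrix_matrix_mult_def if_distrib[of "\<lambda>x. _ * x"] sum.If_cases cong: if_cong)

lemma mat_unit_mult:
  "mat_unit i j ** mat_unit k l = (if j = k then mat_unit i l else (0::'a::semiring_1^'n^'n))"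
  by (simp add: vec_eq_iff mat_unit_mult_left_nth)

lemma trace_mat_unit_mult: "trace (mat_unit k l ** (M::'a::comm_semiring_1^'n^'n)) = M $ l $ k"
  by (simp add: trace_def mat_unit_mult_left_nth)

lemma sum_mat_unit_diag: "(\<Sum>k\<in>UNIV. mat_unit k k) = (mat 1 :: 'a::semiring_1^'n^'n)"
  by (simp add: vec_eq_iff sum_component mat_def sum.If_cases)

lemma cmat_scale_nth [simp]: "cmat_scale c A $ i $ j = c * A $ i $ j"
  by (simp add: cmat_scale_def)

lemma cmat_scale_diff: "cmat_scale c (A - B) = cmat_scale c A - cmat_scale c B"
  by (simp add: vec_eq_iff right_diff_distrib)

lemma matrix_cmat_scale_left: "cmat_scale c A ** B = cmat_scale c (A ** B)"
  by (simp add: vec_eq_iff matrix_matrix_mult_def sum_distrib_left mult.assoc)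

lemma matrix_cmat_scale_right: "A ** cmat_scale c B = cmat_scale c (A ** B)"
  by (simp add: vec_eq_iff matrix_matrix_mult_def sum_distrib_left mult_ac)

lemma trace_cmat_scale: "trace (cmat_scale c A) = c * trace A"
  by (simp add: trace_def sum_distrib_left)

lemma matrix_eq_sum_mat_units:
  "A = (\<Sum>i\<in>UNIV. \<Sum>j\<in>UNIV. cmat_scale (A $ i $ j) (mat_unit i j))"
  by (simp add: vec_eq_iff sum_component if_distrib[of "\<lambda>x. _ * x"] sum.If_cases cong: if_cong)

lemma clinear_op_zero: "clinear_op T \<Longrightarrow> T 0 = 0"
  unfolding clinear_op_def by (metis add_cancel_right_right add_0)

lemma clinear_op_add: "clinear_op T \<Longrightarrow> T (a + b) = T a + T b"
  by (simp add: clinear_op_def)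

lemma clinear_op_diff: "clinear_op T \<Longrightarrow> T (a - b) = T a - T b"
  unfolding clinear_op_def by (metis add_diff_cancel diff_add_cancel eq_diff_eq)

lemma clinear_op_sum:
  assumes "clinear_op T" and "finite S"
  shows "T (sum f S) = (\<Sum>x\<in>S. T (f x))"
  using assms(2) by induction (simp_all add: clinear_op_zero[OF assms(1)] clinear_op_add[OF assms(1)])

lemma clinear_op_eq_commutator:
  assumes "clinear_op T" and "\<And>i j. T (mat_unit i j) = a ** mat_unit i j - mat_unit i j ** a"
  shows "T z = a ** z - z ** a"
proof -
  let ?units = "\<lambda>i. \<Sum>j\<in>UNIV. cmat_scale (z $ i $ j) (mat_unit i j)"
  have "T z = T (\<Sum>i\<in>UNIV. ?units i)"
    by (subst matrix_eq_sum_mat_units) simp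
  also have "\<dots> = (\<Sum>i\<in>UNIV. \<Sum>j\<in>UNIV. cmat_scale (z $ i $ j) (a ** mat_unit i j - mat_unit i j ** a))"
    using assms by (simp add: clinear_op_sum clinear_op_def)
  also have "\<dots> = a ** (\<Sum>i\<in>UNIV. ?units i) - (\<Sum>i\<in>UNIV. ?units i) ** a"
    by (simp add: cmat_scale_diff matrix_cmat_scale_left matrix_cmat_scale_right sum_subtractf
        matrix_sum_left matrix_sum_right)
  finally show ?thesis
    by (simp flip: matrix_eq_sum_mat_units)
qed

lemma derivation_inner:
  fixes D :: "complex^'n^'n \<Rightarrow> complex^'n^'n"
  assumes "is_derivation D"
  obtains a where "\<And>z. D z = a ** z - z ** a"
proof
  have lin: "clinear_op D" and leibniz: "\<And>x y. D (x ** y) = D x ** y + x ** D y"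
    using assms by (auto simp: is_derivation_def)
  fix r :: 'n
  define a where "a = (\<Sum>k\<in>UNIV. D (mat_unit k r) ** mat_unit r k)"
  show "D z = a ** z - z ** a" for z
  proof (rule clinear_op_eq_commutator[OF lin])
    fix i j
    have a_left: "a ** mat_unit i j = D (mat_unit i r) ** mat_unit r j"
      by (simp add: a_def matrix_sum_left flip: matrix_mul_assoc)
        (simp add: mat_unit_mult if_distrib[of "\<lambda>x. _ ** x"] cong: if_cong)
    have unit_left: "mat_unit i j ** D (mat_unit k r)
        = (if j = k then D (mat_unit i r) else 0) - D (mat_unit i j) ** mat_unit k r" for k
      using leibniz[of "mat_unit i j" "mat_unit k r"]
      by (auto simp: mat_unit_mult clinear_op_zero[OF lin] algebra_simps)
    have "mat_unit i j ** a = (\<Sum>k\<in>UNIV. (mat_unit i j ** D (mat_unit k r)) ** mat_unit r k)"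
      by (simp add: a_def matrix_sum_right matrix_mul_assoc)
    also have "\<dots> = D (mat_unit i r) ** mat_unit r j
        - D (mat_unit i j) ** (\<Sum>k\<in>UNIV. mat_unit k k)"
      by (simp add: unit_left matrix_diff_rdistrib if_distrib[of "\<lambda>x. x ** _"] sum_subtractf
          matrix_sum_right mat_unit_mult flip: matrix_mul_assoc cong: if_cong)
    finally show "D (mat_unit i j) = a ** mat_unit i j - mat_unit i j ** a"
      by (simp add: a_left sum_mat_unit_diag)
  qed
qed

lemma trace_derivation_commuting:
  assumes "is_derivation D" and "z ** w = w ** z"
  shows "trace (w ** D z) = 0"
proof -
  obtain a where a: "\<And>z. D z = a ** z - z ** a"
    using derivation_inner[OF assms(1)] by blast
  have "trace (w ** (a ** z)) = trace ((w ** z) ** a)"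
    using trace_mul_sym[of "w ** a" z] by (simp add: matrix_mul_assoc assms(2))
  then show ?thesis
    by (simp add: a matrix_diff_ldistrib trace_sub matrix_mul_assoc)
qed

lemma clinear_functional_trace_mult: "clinear_functional (\<lambda>m. trace (w ** m))"
  unfolding clinear_functional_def
  by (simp add: matrix_add_ldistrib trace_add matrix_cmat_scale_right trace_cmat_scale)

lemma clinear_functional_entry: "clinear_functional (\<lambda>m. m $ p $ q)"
  unfolding clinear_functional_def by simp

lemma weak_2_local_derivation_trace_eq:
  assumes "weak_2_local_derivation \<Delta>" and "(x - x') ** w = w ** (x - x')"
  shows "trace (w ** \<Delta> x) = trace (w ** \<Delta> x')"
proof -
  obtain D where D: "is_derivation D" "trace (w ** \<Delta> x) = trace (w ** D x)"
      "trace (w ** \<Delta> x') = trace (w ** D x')"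
    using assms(1) clinear_functional_trace_mult[of w]
    unfolding weak_2_local_derivation_def by blast
  then have "trace (w ** \<Delta> x) - trace (w ** \<Delta> x') = trace (w ** D (x - x'))"
    by (simp add: is_derivation_def clinear_op_diff matrix_diff_ldistrib trace_sub)
  also have "\<dots> = 0"
    by (rule trace_derivation_commuting[OF D(1) assms(2)])
  finally show ?thesis by simp
qed

lemma weak_2_local_derivation_scale:
  assumes "weak_2_local_derivation \<Delta>"
  shows "\<Delta> (cmat_scale c x) = cmat_scale c (\<Delta> x)"
proof -
  have "\<Delta> (cmat_scale c x) $ p $ q = c * \<Delta> x $ p $ q" for p q
  proof -
    obtain D where "is_derivation D" "\<Delta> x $ p $ q = D x $ p $ q"
      "\<Delta> (cmat_scale c x) $ p $ q = D (cmat_scale c x) $ p $ q"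
      using assms clinear_functional_entry[of p q]
      unfolding weak_2_local_derivation_def by blast
    then show ?thesis by (simp add: is_derivation_def clinear_op_def)
  qed
  then show ?thesis by (simp add: vec_eq_iff)
qed

lemma weak_2_local_derivation_trace_shift:
  assumes "weak_2_local_derivation \<Delta>"
  shows "trace (w ** \<Delta> (x + cmat_scale t e))
    = trace (w ** \<Delta> x) + t * (trace (e ** \<Delta> x) - trace (e ** \<Delta> (x + w)))"
proof -
  let ?v = "w + cmat_scale t e" and ?y = "x + cmat_scale t e + w"
  have "x - ?y = - ?v" by (simp add: algebra_simps)
  then have "(x - ?y) ** ?v = ?v ** (x - ?y)"
    by (simp only: matrix_minus_left matrix_minus_right)
  then have 1: "trace (?v ** \<Delta> x) = trace (?v ** \<Delta> ?y)"
    by (rule weak_2_local_derivation_trace_eq[OF assms])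
  have 2: "trace (w ** \<Delta> ?y) = trace (w ** \<Delta> (x + cmat_scale t e))"
    by (rule weak_2_local_derivation_trace_eq[OF assms]) simp
  have 3: "trace (e ** \<Delta> ?y) = trace (e ** \<Delta> (x + w))"
    by (rule weak_2_local_derivation_trace_eq[OF assms])
      (simp add: matrix_cmat_scale_left matrix_cmat_scale_right)
  from 1 2 3 show ?thesis
    by (simp add: matrix_add_rdistrib trace_add matrix_cmat_scale_left trace_cmat_scale
        algebra_simps)
qed

lemma weak_2_local_derivation_trace_add:
  assumes "weak_2_local_derivation \<Delta>"
  shows "trace (w ** \<Delta> (x + y)) = trace (w ** \<Delta> x) + trace (w ** \<Delta> y)"
proof -
  define g where "g z = trace (w ** \<Delta> z)" for z
  define K1 where "K1 = trace (y ** \<Delta> x) - trace (y ** \<Delta> (x + w))"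
  define K2 where "K2 = trace (x ** \<Delta> y) - trace (x ** \<Delta> (y + w))"
  have affine1: "g (x + cmat_scale t y) = g x + t * K1" for t
    unfolding g_def K1_def by (rule weak_2_local_derivation_trace_shift[OF assms])
  have affine2: "g (x + cmat_scale t y) = t * g y + K2" if "t \<noteq> 0" for t
  proof -
    have "x + cmat_scale t y = cmat_scale t (y + cmat_scale (1/t) x)"
      using that by (simp add: vec_eq_iff field_simps)
    then have "g (x + cmat_scale t y) = t * g (y + cmat_scale (1/t) x)"
      by (simp add: g_def weak_2_local_derivation_scale[OF assms] matrix_cmat_scale_right
          trace_cmat_scale)
    also have "\<dots> = t * (g y + (1/t) * K2)"
      unfolding g_def K2_def by (subst weak_2_local_derivation_trace_shift[OF assms]) simp
    finally show ?thesis
      using that by (simp add: distrib_left)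
  qed
  have "K1 = g y"
    using affine1[of 1] affine2[of 1] affine1[of 2] affine2[of 2] by simp algebra
  moreover have "x + cmat_scale 1 y = x + y"
    by (simp add: vec_eq_iff)
  ultimately show ?thesis
    using affine1[of 1] unfolding g_def by simp
qed

lemma weak_2_local_derivation_clinear:
  assumes "weak_2_local_derivation \<Delta>"
  shows "clinear_op \<Delta>"
proof -
  have "\<Delta> (x + y) $ p $ q = (\<Delta> x + \<Delta> y) $ p $ q" for x y p q
    using weak_2_local_derivation_trace_add[OF assms, of "mat_unit q p" x y]
    by (simp add: trace_mat_unit_mult)
  then show ?thesis
    unfolding clinear_op_def by (simp add: vec_eq_iff weak_2_local_derivation_scale[OF assms])
qed

lemma weak_2_local_derivation_zero:
  assumes "weak_2_local_derivation \<Delta>"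
  shows "\<Delta> 0 = 0"
  using clinear_op_zero[OF weak_2_local_derivation_clinear[OF assms]] .

locale trace_commutant_zero =
  fixes T :: "complex^'n^'n \<Rightarrow> complex^'n^'n"
  assumes clinear: "clinear_op T"
    and trace_commuting: "\<And>z w. z ** w = w ** z \<Longrightarrow> trace (w ** T z) = 0"
begin

lemma unit_entry_zero_if_commute:
  assumes "mat_unit i j ** mat_unit k l = mat_unit k l ** (mat_unit i j :: complex^'n^'n)"
  shows "T (mat_unit i j) $ l $ k = 0"
  using trace_commuting[OF assms] by (simp add: trace_mat_unit_mult)

lemma unit_entry_zero: "j \<noteq> k \<Longrightarrow> l \<noteq> i \<Longrightarrow> T (mat_unit i j) $ l $ k = 0"
  by (rule unit_entry_zero_if_commute) (simp add: mat_unit_mult)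

lemma unit_entry_transpose_zero: "T (mat_unit i j) $ j $ i = 0"
  by (rule unit_entry_zero_if_commute) simp

lemma unit_entry_antisym: "T (mat_unit i j) $ l $ k = - T (mat_unit k l) $ j $ i"
proof -
  have "trace ((mat_unit i j + mat_unit k l) ** T (mat_unit i j + mat_unit k l)) = 0"
    by (rule trace_commuting) simp
  then show ?thesis
    by (simp add: clinear_op_add[OF clinear] matrix_add_ldistrib matrix_add_rdistrib trace_add
        trace_mat_unit_mult unit_entry_transpose_zero eq_neg_iff_add_eq_0 add.commute)
qed

lemma unit_entry_column_shift:
  assumes "i \<noteq> l"
  shows "T (mat_unit i j) $ l $ j = T (mat_unit i j') $ l $ j'"
proof (cases "j = j'")
  case False
  have "(mat_unit i j + mat_unit i j' :: complex^'n^'n) ** (mat_unit j l - mat_unit j' l)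
      = (mat_unit j l - mat_unit j' l) ** (mat_unit i j + mat_unit i j')"
    using False assms
    by (simp add: matrix_add_ldistrib matrix_add_rdistrib matrix_diff_ldistrib
        matrix_diff_rdistrib mat_unit_mult)
  then have "trace ((mat_unit j l - mat_unit j' l) ** T (mat_unit i j + mat_unit i j')) = 0"
    by (rule trace_commuting)
  then show ?thesis
    using False assms
    by (simp add: clinear_op_add[OF clinear] matrix_diff_rdistrib trace_sub matrix_add_ldistrib
        trace_add trace_mat_unit_mult unit_entry_zero)
qed simp

lemma unit_entry_cyclic:
  assumes "i \<noteq> j" "j \<noteq> k" "k \<noteq> i"
  shows "T (mat_unit i j) $ i $ j + T (mat_unit j k) $ j $ k + T (mat_unit k i) $ k $ i = 0"
proof -
  let ?z = "mat_unit i j + mat_unit j k + mat_unit k i :: complex^'n^'n"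
    and ?w = "mat_unit j i + mat_unit k j + mat_unit i k"
  have "?z ** ?w = ?w ** ?z"
    using assms by (simp add: matrix_add_ldistrib matrix_add_rdistrib mat_unit_mult add_ac)
  then have "trace (?w ** T ?z) = 0"
    by (rule trace_commuting)
  then show ?thesis
    using assms
    by (simp add: clinear_op_add[OF clinear] matrix_add_rdistrib trace_add matrix_add_ldistrib
        trace_mat_unit_mult unit_entry_zero add_ac)
qed

lemma unit_entry_diagonal:
  "T (mat_unit i j) $ i $ j = T (mat_unit i r) $ i $ r - T (mat_unit j r) $ j $ r"
proof -
  consider "i = j" | "i \<noteq> j" "i = r" | "i \<noteq> j" "j = r" | "i \<noteq> j" "j \<noteq> r" "r \<noteq> i"
    by blast
  then show ?thesis
  proof cases
    case 1
    then show ?thesis by (simp add: unit_entry_transpose_zero)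
  next
    case 2
    then show ?thesis
      using unit_entry_antisym[of r j r j] by (simp add: unit_entry_transpose_zero)
  next
    case 3
    then show ?thesis by (simp add: unit_entry_transpose_zero)
  next
    case 4
    then show ?thesis
      using unit_entry_cyclic[of i j r] unit_entry_antisym[of r i r i]
      by (simp add: algebra_simps eq_neg_iff_add_eq_0)
  qed
qed

definition inner_witness :: "'n \<Rightarrow> complex^'n^'n" where
  "inner_witness r = (\<chi> p i. if p = i then T (mat_unit i r) $ i $ r else T (mat_unit i i) $ p $ i)"

lemma unit_eq_commutator:
  "T (mat_unit i j) = inner_witness r ** mat_unit i j - mat_unit i j ** inner_witness r"
proof -
  have "T (mat_unit i j) $ p $ q
      = (if q = j then inner_witness r $ p $ i else 0) - (if p = i then inner_witness r $ j $ q else 0)"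
    for p q
  proof -
    consider "p = i" "q = j" | "p \<noteq> i" "q = j" | "p = i" "q \<noteq> j" | "p \<noteq> i" "q \<noteq> j"
      by blast
    then show ?thesis
    proof cases
      case 1
      then show ?thesis
        using unit_entry_diagonal[of i j r] by (simp add: inner_witness_def unit_entry_transpose_zero)
    next
      case 2
      then show ?thesis
        using unit_entry_column_shift[of i p j i] by (simp add: inner_witness_def)
    next
      case 3
      then show ?thesis
        using unit_entry_antisym[of i j i q] unit_entry_column_shift[of q j i q]
        by (simp add: inner_witness_def)
    next
      case 4
      then show ?thesis by (simp add: unit_entry_zero)
    qed
  qed
  then show ?thesis
    by (simp add: vec_eq_iff mat_unit_mult_left_nth mat_unit_mult_right_nth)
qed

lemma is_derivation: "is_derivation T"
proof -
  fix r :: 'n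
  have "T z = inner_witness r ** z - z ** inner_witness r" for z
    by (rule clinear_op_eq_commutator[OF clinear unit_eq_commutator])
  then show ?thesis
    unfolding is_derivation_def
    by (simp add: clinear matrix_diff_ldistrib matrix_diff_rdistrib matrix_mul_assoc)
qed

end

theorem proposition2p11:
  fixes \<Delta> :: "complex^'n^'n \<Rightarrow> complex^'n^'n"
  assumes "weak_2_local_derivation \<Delta>"
    and "\<forall>a. cmat_adj (\<Delta> (cmat_adj a)) = \<Delta> a"
  shows "clinear_op \<Delta> \<and> is_derivation \<Delta>"
proof -
  have clinear: "clinear_op \<Delta>"
    by (rule weak_2_local_derivation_clinear[OF assms(1)])
  interpret trace_commutant_zero \<Delta>
  proof
    show "clinear_op \<Delta>" by (rule clinear)
  next
    fix z w :: "complex^'n^'n"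
    assume "z ** w = w ** z"
    then have "trace (w ** \<Delta> z) = trace (w ** \<Delta> 0)"
      by (intro weak_2_local_derivation_trace_eq[OF assms(1)]) simp
    then show "trace (w ** \<Delta> z) = 0"
      by (simp add: weak_2_local_derivation_zero[OF assms(1)] trace_def)
  qed
  show ?thesis
    using clinear is_derivation by blast
qed

end
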